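(* Suppose $(n,w)$ is an instance of TSP with $w:E_n\to[-1,1]$ and $w[K_n]=d\binom n2$ for some $d\in[0,1]$, and let $H$ be a directed Hamilton cycle of $K_n$ whose vertices in order are $v_0,v_1,\dots,v_{n-1}$. Writing $w_H^+(v_i):=\sum_{i+1\le j\le n-1}|w(v_iv_j)|$, we have $$\sum_{i=1}^{n-2}\frac{w_H^+(v_{i-1})}{n-i}\le \sqrt d\,n+2.$$
   Context: $K_n=(V_n,E_n)$ is the complete graph on $n$ vertices and $w[K_n]=\sum_{e\in E_n}|w(e)|$. *)

theory Defs
  imports Complex_Main
begin

definition Kn_edges :: "nat \<Rightarrow> nat set set" where
  "Kn_edges n = {e. e \<subseteq> {0..<n} \<and> card e = 2}"

definition total_abs_weight :: "nat \<Rightarrow> (nat set \<Rightarrow> real) \<Rightarrow> real" where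
  "total_abs_weight n w = (\<Sum>e\<in>Kn_edges n. \<bar>w e\<bar>)"

text \<open>A directed Hamilton cycle of K_n with vertices v_0, ..., v_(n-1) in order is
  given by a bijection v of {0..<n} onto V_n.\<close>
definition ham_order :: "nat \<Rightarrow> (nat \<Rightarrow> nat) \<Rightarrow> bool" where
  "ham_order n v \<longleftrightarrow> bij_betw v {0..<n} {0..<n}"

definition w_plus :: "nat \<Rightarrow> (nat set \<Rightarrow> real) \<Rightarrow> (nat \<Rightarrow> nat) \<Rightarrow> nat \<Rightarrow> real" where
  "w_plus n w v i = (\<Sum>j\<in>{i+1..<n}. \<bar>w {v i, v j}\<bar>)"

end

theory Submission
  imports Defs
begin

text \<open>Put \<open>k = n - i\<close> and \<open>a\<^sub>k = w\<^sub>H\<^sup>+(v\<^sub>i\<^sub>-\<^sub>1)\<close>. Then \<open>0 \<le> a\<^sub>k \<le> k\<close> for distinct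
  positive \<open>k\<close>, and \<open>\<Sum> a\<^sub>k \<le> w[K\<^sub>n] = D\<close> with \<open>D = d(n choose 2)\<close>, because every edge is
  counted once, from its earlier endpoint on \<open>H\<close>. For an integer threshold \<open>m \<ge> 1\<close> we have
  \<open>a/k \<le> a/m + (m - k)\<^sup>+/m\<close> whenever \<open>0 \<le> a \<le> k\<close>; summing gives
  \<open>\<Sum> a\<^sub>k/k \<le> D/m + (m - 1)/2\<close>, and \<open>m = \<lceil>\<surd>(2D)\<rceil>\<close> yields \<open>\<surd>(2D) \<le> \<surd>d n\<close>.\<close>

lemma divide_le_divide_plus_excess:
  fixes a k M :: real
  assumes "0 \<le> a" "a \<le> k" "0 < k" "0 < M"
  shows "a / k \<le> a / M + max 0 (M - k) / M"
proof (cases "k < M")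
  case True
  have "a / k - a / M = a * (M - k) / (k * M)" using assms by (simp add: field_simps)
  also have "\<dots> \<le> k * (M - k) / (k * M)"
    using assms True by (intro divide_right_mono mult_right_mono) auto
  also have "\<dots> = (M - k) / M" using assms by simp
  finally show ?thesis using True by simp
next
  case False
  then show ?thesis using assms by (simp add: divide_left_mono)
qed

lemma sum_diff_of_nat_atLeastLessThan:
  "(\<Sum>k\<in>{1..<m}. real m - real k) = real m * (real m - 1) / 2"
proof (induction m)
  case (Suc m)
  have "(\<Sum>k\<in>{1..<Suc m}. real (Suc m) - real k) = (\<Sum>k\<in>{1..<Suc m}. (real m - real k) + 1)"
    by (intro sum.cong) auto
  also have "\<dots> = (\<Sum>k\<in>{1..<m}. real m - real k) + real m"
    by (cases m) (simp_all only: sum.distrib atLeastLessThanSuc, simp_all)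
  finally show ?case using Suc.IH by (simp add: field_simps)
qed simp

lemma sum_excess_le:
  fixes K :: "nat set" and m :: nat
  assumes "finite K" "0 \<notin> K" "1 \<le> m"
  shows "(\<Sum>k\<in>K. max 0 (real m - real k) / real m) \<le> (real m - 1) / 2"
proof -
  have "(\<Sum>k\<in>K. max 0 (real m - real k) / real m)
      = (\<Sum>k\<in>K \<inter> {1..<m}. (real m - real k) / real m)"
    using assms by (intro sum.mono_neutral_cong_right) (auto simp: max_def Suc_le_eq intro!: gr0I)
  also have "\<dots> \<le> (\<Sum>k\<in>{1..<m}. (real m - real k) / real m)"
    by (intro sum_mono2) auto
  also have "\<dots> = (real m - 1) / 2"
    using assms sum_diff_of_nat_atLeastLessThan[of m] by (simp add: sum_divide_distrib[symmetric])
  finally show ?thesis .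
qed

lemma sum_divide_le_threshold:
  fixes a :: "'i \<Rightarrow> real" and \<kappa> :: "'i \<Rightarrow> nat"
  assumes "finite I" "inj_on \<kappa> I" "\<forall>i\<in>I. 0 < \<kappa> i \<and> 0 \<le> a i \<and> a i \<le> \<kappa> i"
    and "sum a I \<le> D" "1 \<le> m"
  shows "(\<Sum>i\<in>I. a i / \<kappa> i) \<le> D / m + (real m - 1) / 2"
proof -
  have "(\<Sum>i\<in>I. a i / \<kappa> i) \<le> (\<Sum>i\<in>I. a i / m + max 0 (real m - \<kappa> i) / m)"
    using assms(3,5) by (intro sum_mono divide_le_divide_plus_excess) auto
  also have "\<dots> = sum a I / m + (\<Sum>k\<in>\<kappa> ` I. max 0 (real m - real k) / m)"
    using assms(2) by (simp add: sum.distrib sum_divide_distrib sum.reindex)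
  also have "\<dots> \<le> D / m + (real m - 1) / 2"
    using assms by (intro add_mono divide_right_mono sum_excess_le) auto
  finally show ?thesis .
qed

lemma sum_divide_le_sqrt:
  fixes a :: "'i \<Rightarrow> real" and \<kappa> :: "'i \<Rightarrow> nat"
  assumes "finite I" "inj_on \<kappa> I" "\<forall>i\<in>I. 0 < \<kappa> i \<and> 0 \<le> a i \<and> a i \<le> \<kappa> i"
    and "sum a I \<le> D"
  shows "(\<Sum>i\<in>I. a i / \<kappa> i) \<le> sqrt (2 * D)"
proof -
  have "0 \<le> D" using assms(3,4) sum_nonneg[of I a] by fastforce
  define s where "s = sqrt (2 * D)"
  have s: "0 \<le> s" "s * s = 2 * D" unfolding s_def using \<open>0 \<le> D\<close> by simp_all
  define m where "m = max 1 (nat \<lceil>s\<rceil>)"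
  have m: "1 \<le> m" "s \<le> m" "real m - 1 \<le> s"
    unfolding m_def using s(1) ceiling_correct[of s] by (auto simp: max_def) linarith+
  have "2 * D \<le> s * m"
    using s mult_left_mono[OF m(2) s(1)] by simp
  then have "D / m \<le> s / 2"
    using m(1) by (simp add: field_simps)
  then show ?thesis
    using sum_divide_le_threshold[OF assms m(1)] m(3) s_def by argo
qed

lemma sqrt_two_mult_choose_two_le:
  assumes "0 \<le> d"
  shows "sqrt (2 * (d * real (n choose 2))) \<le> sqrt d * real n"
proof -
  have "2 * (n choose 2) \<le> n * n"
    by (simp add: choose_two)
      (metis diff_le_self div_times_less_eq_dividend le_trans mult_le_mono2 mult.commute)
  then have "2 * (d * real (n choose 2)) \<le> d * (real n * real n)"
    using assms by (metis mult.left_commute mult_left_mono of_nat_le_iff of_nat_mult of_nat_numeral)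
  then show ?thesis
    using real_sqrt_le_mono by (fastforce simp: real_sqrt_mult)
qed

lemma ordered_doubleton_inj:
  assumes "inj_on v A" "i \<in> A" "j \<in> A" "i' \<in> A" "j' \<in> A"
    and "i < j" "i' < (j' :: 'a :: order)" "{v i, v j} = {v i', v j'}"
  shows "i = i' \<and> j = j'"
proof -
  from assms(8) consider "v i = v i'" "v j = v j'" | "v i = v j'" "v j = v i'"
    by (auto simp: doubleton_eq_iff)
  then show ?thesis
  proof cases
    case 1
    then show ?thesis using assms(1-5) by (auto dest: inj_onD)
  next
    case 2
    then have "i = j'" "j = i'" using assms(1-5) by (auto dest: inj_onD)
    then show ?thesis using assms(6,7) by auto
  qed
qed

lemma ham_order_edge:
  assumes "ham_order n v" "i < n" "j < n" "i \<noteq> j"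
  shows "{v i, v j} \<in> Kn_edges n"
proof -
  have "v i \<noteq> v j" "v i < n" "v j < n"
    using assms bij_betw_apply[of v "{0..<n}" "{0..<n}"]
    unfolding ham_order_def bij_betw_def inj_on_def by auto
  then show ?thesis unfolding Kn_edges_def by auto
qed

lemma ham_order_bij_betw_Kn_edges:
  assumes ham: "ham_order n v"
  shows "bij_betw (\<lambda>(i, j). {v i, v j}) (SIGMA i:{..<n}. {i+1..<n}) (Kn_edges n)"
proof -
  have inj: "inj_on v {0..<n}" and surj: "v ` {0..<n} = {0..<n}"
    using ham unfolding ham_order_def bij_betw_def by auto
  have "inj_on (\<lambda>(i, j). {v i, v j}) (SIGMA i:{..<n}. {i+1..<n})"
  proof (rule inj_onI)
    fix p q
    assume "p \<in> (SIGMA i:{..<n}. {i+1..<n})" "q \<in> (SIGMA i:{..<n}. {i+1..<n})"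
      and "(\<lambda>(i, j). {v i, v j}) p = (\<lambda>(i, j). {v i, v j}) q"
    then show "p = q"
      using ordered_doubleton_inj[OF inj, of "fst p" "snd p" "fst q" "snd q"]
      by (auto simp: split_beta prod_eq_iff)
  qed
  moreover have "Kn_edges n \<subseteq> (\<lambda>(i, j). {v i, v j}) ` (SIGMA i:{..<n}. {i+1..<n})"
  proof
    fix e assume "e \<in> Kn_edges n"
    then obtain x y where e: "e = {x, y}" "x \<noteq> y" "x < n" "y < n"
      unfolding Kn_edges_def card_2_iff by auto
    have "x \<in> v ` {0..<n}" "y \<in> v ` {0..<n}"
      using surj e(3,4) by auto
    then obtain i j where ij: "i < n" "j < n" "x = v i" "y = v j"
      by auto
    have "i \<noteq> j"
      using ij e(2) by blast
    then consider "i < j" | "j < i"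
      by linarith
    then show "e \<in> (\<lambda>(i, j). {v i, v j}) ` (SIGMA i:{..<n}. {i+1..<n})"
    proof cases
      case 1
      then show ?thesis
        using ij e(1) by (intro rev_image_eqI[of "(i, j)"]) auto
    next
      case 2
      then show ?thesis
        using ij e(1) by (intro rev_image_eqI[of "(j, i)"]) (auto simp: insert_commute)
    qed
  qed
  moreover have "(\<lambda>(i, j). {v i, v j}) ` (SIGMA i:{..<n}. {i+1..<n}) \<subseteq> Kn_edges n"
    using ham_order_edge[OF ham] by auto
  ultimately show ?thesis unfolding bij_betw_def by blast
qed

lemma sum_w_plus_eq_total_abs_weight:
  assumes "ham_order n v"
  shows "(\<Sum>i<n. w_plus n w v i) = total_abs_weight n w"
  unfolding w_plus_def total_abs_weight_def
  using sum.reindex_bij_betw[OF ham_order_bij_betw_Kn_edges[OF assms], of "\<lambda>e. \<bar>w e\<bar>"]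
  by (simp add: sum.Sigma split_def)

lemma w_plus_nonneg: "0 \<le> w_plus n w v i"
  unfolding w_plus_def by (simp add: sum_nonneg)

lemma w_plus_le:
  assumes ham: "ham_order n v" and w_range: "\<forall>e\<in>Kn_edges n. -1 \<le> w e \<and> w e \<le> 1"
  shows "w_plus n w v i \<le> real (n - Suc i)"
proof -
  have "w_plus n w v i \<le> (\<Sum>j\<in>{i+1..<n}. 1)"
    unfolding w_plus_def
    using w_range ham_order_edge[OF ham, of i] by (intro sum_mono) force
  then show ?thesis by simp
qed

theorem proposition4p4:
  fixes n :: nat and w :: "nat set \<Rightarrow> real" and d :: real and v :: "nat \<Rightarrow> nat"
  assumes w_range: "\<forall>e\<in>Kn_edges n. -1 \<le> w e \<and> w e \<le> 1"
    and d_range: "0 \<le> d" "d \<le> 1"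
    and total: "total_abs_weight n w = d * real (n choose 2)"
    and ham: "ham_order n v"
  shows "(\<Sum>i\<in>{1..n-2}. w_plus n w v (i - 1) / (real n - real i)) \<le> sqrt d * real n + 2"
proof -
  let ?a = "\<lambda>i. w_plus n w v (i - 1)"
  have "?a i \<le> real (n - i)" if "1 \<le> i" for i
    using w_plus_le[OF ham w_range, of "i - 1"] that by simp
  then have bounds: "\<forall>i\<in>{1..n-2}. 0 < n - i \<and> 0 \<le> ?a i \<and> ?a i \<le> real (n - i)"
    by (auto simp: w_plus_nonneg)
  have "sum ?a {1..n-2} = (\<Sum>j\<in>(\<lambda>i. i - 1) ` {1..n-2}. w_plus n w v j)"
    by (subst sum.reindex) (auto simp: inj_on_def)
  also have "\<dots> \<le> (\<Sum>j<n. w_plus n w v j)"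
    by (intro sum_mono2) (auto simp: w_plus_nonneg)
  finally have "sum ?a {1..n-2} \<le> d * real (n choose 2)"
    using sum_w_plus_eq_total_abs_weight[OF ham] total by simp
  moreover have "inj_on (\<lambda>i. n - i) {1..n-2}"
    by (rule inj_onI) auto
  ultimately have "(\<Sum>i\<in>{1..n-2}. ?a i / real (n - i)) \<le> sqrt (2 * (d * real (n choose 2)))"
    using sum_divide_le_sqrt[OF _ _ bounds] by blast
  moreover have "(\<Sum>i\<in>{1..n-2}. ?a i / (real n - real i)) = (\<Sum>i\<in>{1..n-2}. ?a i / real (n - i))"
    by (intro sum.cong) (auto simp: of_nat_diff)
  ultimately show ?thesis
    using sqrt_two_mult_choose_two_le[OF d_range(1), of n] by linarith
qed

end
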